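(* Let $\alpha$ be a nonzero real number and let $\gamma(t)=\Psi(u(t),v(t))$ be a regular curve in $\mathbb S^2$ not passing through $N$. Then $\gamma$ is an $\alpha$-stationary curve if and only if its curvature satisfies $$\kappa=\alpha\,\frac{\langle\mathbf n,\xi\rangle}{\mathsf d}.$$ Here $\mathbf n$ is the unit normal of $\gamma$, $\mathsf d$ is the spherical distance from $\gamma(t)$ to $N$, and $\xi$ is the unit tangent vector at $\gamma(t)$ of the minimizing geodesic joining $N$ and $\gamma(t)$.
   Context: $\mathbb S^2\subset\mathbb R^3$ is the unit sphere with the Euclidean inner product $\langle,\rangle$. It is parametrized by $\Psi(u,v)=(\sin u\cos v,\sin u\sin v,\cos u)$, and $N=(0,0,1)$. The spherical distance from $\Psi(u,v)$, $u\in[0,\pi]$, to $N$ is $u$. For $p=\Psi(u,v)$ with $0<u<\pi$, set $\xi(p)=\Psi_u(u,v)=(\cos u\cos v,\cos u\sin v,-\sin u)$; this is the unit tangent of the minimizing geodesic from $N$ to $p$, pointing away from $N$. For a regular curve $\gamma(t)=\Psi(u(t),v(t))$, we have $|\gamma'|=\sqrt{u'^2+\sin^2(u)v'^2}$. Its unit normal is $\mathbf n=(\gamma'\times\gamma)/|\gamma'|$, with $\times$ the Euclidean cross product. Its curvature is $$\kappa=\frac{\langle\gamma'',\mathbf n\rangle}{|\gamma'|^2}=\frac{\det(\gamma'',\gamma',\gamma)}{|\gamma'|^3}.$$ The energy is $$E_\alpha[\gamma]=\int_\gamma\mathsf d^\alpha ds=\int u^\alpha\sqrt{u'^2+\sin^2(u)v'^2}\,dt.$$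 The curve is $\alpha$-stationary if it is a critical point of $E_\alpha$, i.e. $(u,v)$ satisfies its Euler–Lagrange equations. Throughout the paper, $\alpha\neq0$ and curves avoid $N$. *)

theory Defs
  imports "HOL-Analysis.Analysis"
begin

definition Psi :: "real \<Rightarrow> real \<Rightarrow> real^3" where
  "Psi u v = vector [sin u * cos v, sin u * sin v, cos u]"

text \<open>xi at Psi(u,v): the partial derivative Psi_u, unit tangent of the geodesic from N.\<close>
definition xi_coord :: "real \<Rightarrow> real \<Rightarrow> real^3" where
  "xi_coord u v = vector [cos u * cos v, cos u * sin v, - sin u]"

definition curve :: "(real \<Rightarrow> real) \<Rightarrow> (real \<Rightarrow> real) \<Rightarrow> real \<Rightarrow> real^3" where
  "curve u v t = Psi (u t) (v t)"

definition vel :: "(real \<Rightarrow> real) \<Rightarrow> (real \<Rightarrow> real) \<Rightarrow> real \<Rightarrow> real^3" where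
  "vel u v t = vector_derivative (curve u v) (at t)"

definition acc :: "(real \<Rightarrow> real) \<Rightarrow> (real \<Rightarrow> real) \<Rightarrow> real \<Rightarrow> real^3" where
  "acc u v t = vector_derivative (vel u v) (at t)"

definition unit_normal :: "(real \<Rightarrow> real) \<Rightarrow> (real \<Rightarrow> real) \<Rightarrow> real \<Rightarrow> real^3" where
  "unit_normal u v t = (1 / norm (vel u v t)) *\<^sub>R cross3 (vel u v t) (curve u v t)"

definition curvature :: "(real \<Rightarrow> real) \<Rightarrow> (real \<Rightarrow> real) \<Rightarrow> real \<Rightarrow> real" where
  "curvature u v t = (acc u v t \<bullet> unit_normal u v t) / (norm (vel u v t))\<^sup>2"

definition speed :: "(real \<Rightarrow> real) \<Rightarrow> (real \<Rightarrow> real) \<Rightarrow> real \<Rightarrow> real" where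
  "speed u v t = sqrt ((deriv u t)\<^sup>2 + (sin (u t))\<^sup>2 * (deriv v t)\<^sup>2)"

text \<open>Euler--Lagrange equations of L = u^alpha * sqrt(u'^2 + sin^2(u) v'^2) on the open set I:
  d/dt (dL/du') = dL/du  and  d/dt (dL/dv') = dL/dv = 0.\<close>
definition alpha_stationary ::
  "real \<Rightarrow> (real \<Rightarrow> real) \<Rightarrow> (real \<Rightarrow> real) \<Rightarrow> real set \<Rightarrow> bool" where
  "alpha_stationary \<alpha> u v I \<longleftrightarrow>
     (\<forall>t\<in>I.
        ((\<lambda>s. u s powr \<alpha> * deriv u s / speed u v s) has_real_derivative
            (\<alpha> * u t powr (\<alpha> - 1) * speed u v t
             + u t powr \<alpha> * sin (u t) * cos (u t) * (deriv v t)\<^sup>2 / speed u v t)) (at t)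
      \<and> ((\<lambda>s. u s powr \<alpha> * (sin (u s))\<^sup>2 * deriv v s / speed u v s) has_real_derivative 0) (at t))"

end

theory Submission
  imports Defs
begin

(* In the coordinates (u, v) the velocity is u' Psi_u + v' Psi_v, so with S the speed one finds
   <n, xi> = v' sin u / S and
   kappa = (v' sin u u'' - sin\<^sup>2 u cos u v'\<^sup>3 - 2 u'\<^sup>2 v' cos u - u' sin u v'') / S\<^sup>3.
   Differentiating the momenta of L = u\<^sup>\<alpha> S shows that the residuals of the two Euler-Lagrange
   equations are u\<^sup>\<alpha> sin u (kappa - \<alpha> <n, xi> / u) times v' and -u' respectively. As S > 0,
   (u', v') does not vanish, so both equations hold iff kappa = \<alpha> <n, xi> / u. *)

lemma has_vector_derivative_vector3:
  assumes "(f1 has_real_derivative d1) (at t)" "(f2 has_real_derivative d2) (at t)"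
    and "(f3 has_real_derivative d3) (at t)"
  shows "((\<lambda>s. vector [f1 s, f2 s, f3 s] :: real^3) has_vector_derivative vector [d1, d2, d3])
      (at t)"
proof -
  let ?e1 = "vector [1, 0, 0] :: real^3" and ?e2 = "vector [0, 1, 0] :: real^3"
    and ?e3 = "vector [0, 0, 1] :: real^3"
  have basis: "\<And>x y z. (vector [x, y, z] :: real^3) = x *\<^sub>R ?e1 + y *\<^sub>R ?e2 + z *\<^sub>R ?e3"
    by (simp add: vec_eq_iff forall_3 vector_3)
  have "((\<lambda>s. f1 s *\<^sub>R ?e1 + f2 s *\<^sub>R ?e2 + f3 s *\<^sub>R ?e3) has_vector_derivative
      d1 *\<^sub>R ?e1 + d2 *\<^sub>R ?e2 + d3 *\<^sub>R ?e3) (at t)"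
    using assms by (intro derivative_eq_intros) auto
  moreover have "(\<lambda>s. vector [f1 s, f2 s, f3 s])
      = (\<lambda>s. f1 s *\<^sub>R ?e1 + f2 s *\<^sub>R ?e2 + f3 s *\<^sub>R ?e3)"
    by (rule ext) (rule basis)
  ultimately show ?thesis
    by (simp only: basis[of d1 d2 d3])
qed

definition curve_velocity :: "real \<Rightarrow> real \<Rightarrow> real \<Rightarrow> real \<Rightarrow> real^3" where
  "curve_velocity x y a b = vector
     [cos x * cos y * a - sin x * sin y * b, cos x * sin y * a + sin x * cos y * b, - sin x * a]"

definition curve_acceleration ::
  "real \<Rightarrow> real \<Rightarrow> real \<Rightarrow> real \<Rightarrow> real \<Rightarrow> real \<Rightarrow> real^3" where
  "curve_acceleration x y a b a2 b2 = vector
     [- sin x * cos y * a\<^sup>2 + cos x * cos y * a2 - 2 * cos x * sin y * a * b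
        - sin x * cos y * b\<^sup>2 - sin x * sin y * b2,
      - sin x * sin y * a\<^sup>2 + cos x * sin y * a2 + 2 * cos x * cos y * a * b
        - sin x * sin y * b\<^sup>2 + sin x * cos y * b2,
      - cos x * a\<^sup>2 - sin x * a2]"

lemma has_vector_derivative_curve:
  assumes "(u has_real_derivative a) (at t)" and "(v has_real_derivative b) (at t)"
  shows "(curve u v has_vector_derivative curve_velocity (u t) (v t) a b) (at t)"
  unfolding curve_def Psi_def curve_velocity_def
  by (rule has_vector_derivative_vector3)
    (auto intro!: derivative_eq_intros assms simp: algebra_simps)

lemma has_vector_derivative_curve_velocity:
  assumes "(u has_real_derivative du t) (at t)" and "(v has_real_derivative dv t) (at t)"
    and "(du has_real_derivative a2) (at t)" and "(dv has_real_derivative b2) (at t)"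
  shows "((\<lambda>s. curve_velocity (u s) (v s) (du s) (dv s)) has_vector_derivative
      curve_acceleration (u t) (v t) (du t) (dv t) a2 b2) (at t)"
  unfolding curve_velocity_def curve_acceleration_def
  by (rule has_vector_derivative_vector3)
    (auto intro!: derivative_eq_intros assms simp: algebra_simps power2_eq_square)

lemma vel_eq_curve_velocity:
  assumes "u differentiable (at t)" and "v differentiable (at t)"
  shows "vel u v t = curve_velocity (u t) (v t) (deriv u t) (deriv v t)"
  unfolding vel_def
  by (intro vector_derivative_at has_vector_derivative_curve
      DERIV_deriv_iff_real_differentiable[THEN iffD2] assms)

lemma acc_eq_curve_acceleration:
  assumes "open I" and "t \<in> I"
    and "\<forall>s\<in>I. u differentiable (at s) \<and> v differentiable (at s)"
    and "(deriv u has_real_derivative a2) (at t)" and "(deriv v has_real_derivative b2) (at t)"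
  shows "acc u v t = curve_acceleration (u t) (v t) (deriv u t) (deriv v t) a2 b2"
proof -
  have "((\<lambda>s. curve_velocity (u s) (v s) (deriv u s) (deriv v s)) has_vector_derivative
      curve_acceleration (u t) (v t) (deriv u t) (deriv v t) a2 b2) (at t)"
    using assms by (intro has_vector_derivative_curve_velocity)
      (auto simp: DERIV_deriv_iff_real_differentiable)
  then have "(vel u v has_vector_derivative
      curve_acceleration (u t) (v t) (deriv u t) (deriv v t) a2 b2) (at t)"
    by (rule has_vector_derivative_transform_within_open[OF _ assms(1,2)])
      (use assms(3) vel_eq_curve_velocity in auto)
  then show ?thesis
    unfolding acc_def by (rule vector_derivative_at)
qed

lemma inner_curve_velocity_self:
  "curve_velocity x y a b \<bullet> curve_velocity x y a b = a\<^sup>2 + (sin x)\<^sup>2 * b\<^sup>2"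
proof -
  have "(sin x)\<^sup>2 + (cos x)\<^sup>2 = 1" and "(sin y)\<^sup>2 + (cos y)\<^sup>2 = 1"
    by simp_all
  then show ?thesis
    unfolding curve_velocity_def inner_vec_def sum_3 vector_3 inner_real_def by algebra
qed

lemma curve_acceleration_inner_cross:
  "curve_acceleration x y a b a2 b2 \<bullet> cross3 (curve_velocity x y a b) (Psi x y)
     = b * sin x * a2 - (sin x)\<^sup>2 * cos x * b ^ 3 - 2 * a\<^sup>2 * b * cos x - a * sin x * b2"
proof -
  have "(sin x)\<^sup>2 + (cos x)\<^sup>2 = 1" and "(sin y)\<^sup>2 + (cos y)\<^sup>2 = 1"
    by simp_all
  then show ?thesis
    unfolding curve_acceleration_def curve_velocity_def Psi_def cross3_def inner_vec_def sum_3
      vector_3 inner_real_def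
    by algebra
qed

lemma cross_curve_velocity_inner_xi:
  "cross3 (curve_velocity x y a b) (Psi x y) \<bullet> xi_coord x y = b * sin x"
proof -
  have "(sin x)\<^sup>2 + (cos x)\<^sup>2 = 1" and "(sin y)\<^sup>2 + (cos y)\<^sup>2 = 1"
    by simp_all
  then show ?thesis
    unfolding curve_velocity_def xi_coord_def Psi_def cross3_def inner_vec_def sum_3 vector_3
      inner_real_def
    by algebra
qed

definition curvature_coord :: "real \<Rightarrow> real \<Rightarrow> real \<Rightarrow> real \<Rightarrow> real \<Rightarrow> real" where
  "curvature_coord x a b a2 b2 =
     (b * sin x * a2 - (sin x)\<^sup>2 * cos x * b ^ 3 - 2 * a\<^sup>2 * b * cos x - a * sin x * b2)
       / sqrt (a\<^sup>2 + (sin x)\<^sup>2 * b\<^sup>2) ^ 3"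

lemma norm_vel_eq_speed:
  assumes "u differentiable (at t)" and "v differentiable (at t)"
  shows "norm (vel u v t) = speed u v t"
  by (simp add: norm_eq_sqrt_inner vel_eq_curve_velocity[OF assms] inner_curve_velocity_self
      speed_def)

lemma curvature_eq_curvature_coord:
  assumes "open I" and "t \<in> I"
    and "\<forall>s\<in>I. u differentiable (at s) \<and> v differentiable (at s)"
    and "(deriv u has_real_derivative a2) (at t)" and "(deriv v has_real_derivative b2) (at t)"
  shows "curvature u v t = curvature_coord (u t) (deriv u t) (deriv v t) a2 b2"
proof -
  have diff: "u differentiable (at t)" "v differentiable (at t)"
    using assms(2,3) by auto
  show ?thesis
    unfolding curvature_def unit_normal_def norm_vel_eq_speed[OF diff] inner_scaleR_right
    unfolding acc_eq_curve_acceleration[OF assms] vel_eq_curve_velocity[OF diff] curve_def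
      curve_acceleration_inner_cross curvature_coord_def
    by (simp add: speed_def power2_eq_square power3_eq_cube)
qed

lemma unit_normal_inner_xi:
  assumes "u differentiable (at t)" and "v differentiable (at t)"
  shows "unit_normal u v t \<bullet> xi_coord (u t) (v t) = deriv v t * sin (u t) / speed u v t"
  unfolding unit_normal_def norm_vel_eq_speed[OF assms] inner_scaleR_left
  unfolding vel_eq_curve_velocity[OF assms] curve_def cross_curve_velocity_inner_xi
  by simp

lemma speed_eq_sqrt:
  assumes "(u has_real_derivative a) (at t)" and "(v has_real_derivative b) (at t)"
  shows "speed u v t = sqrt (a\<^sup>2 + (sin (u t))\<^sup>2 * b\<^sup>2)"
  using assms by (simp add: speed_def DERIV_imp_deriv)

lemma curvature_coord_eq_speed:
  assumes "(u has_real_derivative a) (at t)" and "(v has_real_derivative b) (at t)"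
  shows "curvature_coord (u t) a b a2 b2 = (b * sin (u t) * a2
      - (sin (u t))\<^sup>2 * cos (u t) * b ^ 3 - 2 * a\<^sup>2 * b * cos (u t) - a * sin (u t) * b2)
      / speed u v t ^ 3"
  by (simp add: curvature_coord_def speed_eq_sqrt[OF assms])

lemma has_real_derivative_speed:
  assumes u: "(u has_real_derivative a) (at t)" and v: "(v has_real_derivative b) (at t)"
    and "(deriv u has_real_derivative a2) (at t)" and "(deriv v has_real_derivative b2) (at t)"
    and "speed u v t > 0"
  shows "(speed u v has_real_derivative
      (a * a2 + sin (u t) * cos (u t) * a * b\<^sup>2 + (sin (u t))\<^sup>2 * b * b2) / speed u v t) (at t)"
proof -
  have "speed u v = (\<lambda>s. sqrt ((deriv u s)\<^sup>2 + (sin (u s))\<^sup>2 * (deriv v s)\<^sup>2))"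
    by (simp add: speed_def fun_eq_iff)
  moreover have "a\<^sup>2 + (sin (u t))\<^sup>2 * b\<^sup>2 > 0"
    using assms(5) by (simp add: speed_eq_sqrt[OF u v])
  ultimately show ?thesis
    using assms(1-4) DERIV_imp_deriv[OF u] DERIV_imp_deriv[OF v]
    by (auto intro!: derivative_eq_intros simp: speed_eq_sqrt[OF u v] field_simps power2_eq_square)
qed

lemma has_real_derivative_u_momentum:
  assumes u: "(u has_real_derivative a) (at t)" and v: "(v has_real_derivative b) (at t)"
    and u2: "(deriv u has_real_derivative a2) (at t)" and v2: "(deriv v has_real_derivative b2) (at t)"
    and "u t > 0" and "speed u v t > 0"
  shows "((\<lambda>s. u s powr \<alpha> * deriv u s / speed u v s) has_real_derivative
      \<alpha> * u t powr (\<alpha> - 1) * speed u v t + u t powr \<alpha> * sin (u t) * cos (u t) * b\<^sup>2 / speed u v t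
      + u t powr \<alpha> * b * sin (u t) *
        (curvature_coord (u t) a b a2 b2 - \<alpha> * (b * sin (u t) / speed u v t) / u t)) (at t)"
proof -
  have "u t \<noteq> 0" and "speed u v t \<noteq> 0"
    using assms(5,6) by simp_all
  have speed_sq: "(speed u v t)\<^sup>2 = a\<^sup>2 + (sin (u t))\<^sup>2 * b\<^sup>2"
    using assms(6) by (simp add: speed_eq_sqrt[OF u v])
  have powr_pred: "u t powr (\<alpha> - 1) = u t powr \<alpha> / u t"
    using assms(5) by (simp add: powr_diff)
  note quotient_rule = DERIV_divide[OF DERIV_mult[OF DERIV_fun_powr[OF u assms(5), of \<alpha>] u2]
      has_real_derivative_speed[OF u v u2 v2 assms(6)] \<open>speed u v t \<noteq> 0\<close>]
  show ?thesis
    by (rule DERIV_cong[OF quotient_rule], simp add: powr_pred curvature_coord_eq_speed[OF u v]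
        DERIV_imp_deriv[OF u] \<open>u t \<noteq> 0\<close> \<open>speed u v t \<noteq> 0\<close> field_simps power2_eq_square
        power3_eq_cube)
      (use speed_sq in algebra)
qed

lemma has_real_derivative_v_momentum:
  assumes u: "(u has_real_derivative a) (at t)" and v: "(v has_real_derivative b) (at t)"
    and u2: "(deriv u has_real_derivative a2) (at t)" and v2: "(deriv v has_real_derivative b2) (at t)"
    and "u t > 0" and "speed u v t > 0"
  shows "((\<lambda>s. u s powr \<alpha> * (sin (u s))\<^sup>2 * deriv v s / speed u v s) has_real_derivative
      - (u t powr \<alpha> * a * sin (u t) *
        (curvature_coord (u t) a b a2 b2 - \<alpha> * (b * sin (u t) / speed u v t) / u t))) (at t)"
proof -
  have "u t \<noteq> 0" and "speed u v t \<noteq> 0"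
    using assms(5,6) by simp_all
  have speed_sq: "(speed u v t)\<^sup>2 = a\<^sup>2 + (sin (u t))\<^sup>2 * b\<^sup>2"
    using assms(6) by (simp add: speed_eq_sqrt[OF u v])
  have powr_pred: "u t powr (\<alpha> - 1) = u t powr \<alpha> / u t"
    using assms(5) by (simp add: powr_diff)
  have sin_sq: "((\<lambda>s. (sin (u s))\<^sup>2) has_real_derivative 2 * sin (u t) * cos (u t) * a) (at t)"
    by (auto intro!: derivative_eq_intros u)
  note quotient_rule = DERIV_divide[OF DERIV_mult[OF DERIV_mult[OF
        DERIV_fun_powr[OF u assms(5), of \<alpha>] sin_sq] v2]
      has_real_derivative_speed[OF u v u2 v2 assms(6)] \<open>speed u v t \<noteq> 0\<close>]
  show ?thesis
    by (rule DERIV_cong[OF quotient_rule], simp add: powr_pred curvature_coord_eq_speed[OF u v]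
        DERIV_imp_deriv[OF v] \<open>u t \<noteq> 0\<close> \<open>speed u v t \<noteq> 0\<close> field_simps power2_eq_square
        power3_eq_cube)
      (use speed_sq in algebra)
qed

lemma euler_lagrange_at_iff:
  assumes u: "(u has_real_derivative a) (at t)" and v: "(v has_real_derivative b) (at t)"
    and "(deriv u has_real_derivative a2) (at t)" and "(deriv v has_real_derivative b2) (at t)"
    and "0 < u t" and "u t < pi" and "speed u v t > 0"
  shows "(((\<lambda>s. u s powr \<alpha> * deriv u s / speed u v s) has_real_derivative
            \<alpha> * u t powr (\<alpha> - 1) * speed u v t
            + u t powr \<alpha> * sin (u t) * cos (u t) * (deriv v t)\<^sup>2 / speed u v t) (at t)
        \<and> ((\<lambda>s. u s powr \<alpha> * (sin (u s))\<^sup>2 * deriv v s / speed u v s) has_real_derivative 0) (at t))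
      \<longleftrightarrow> curvature_coord (u t) a b a2 b2 = \<alpha> * (b * sin (u t) / speed u v t) / u t"
    (is "?euler_lagrange \<longleftrightarrow> ?kappa = ?rhs")
proof -
  have derivative_iff: "(f has_real_derivative E) (at t) \<longleftrightarrow> E = D"
    if "(f has_real_derivative D) (at t)" for f D E
    using that DERIV_unique by blast
  have "u t powr \<alpha> > 0" and "sin (u t) > 0"
    using assms(5,6) by (simp_all add: sin_gt_zero)
  moreover have "a \<noteq> 0 \<or> b \<noteq> 0"
    using assms(7) by (auto simp: speed_eq_sqrt[OF u v])
  moreover have "?euler_lagrange \<longleftrightarrow> u t powr \<alpha> * b * sin (u t) * (?kappa - ?rhs) = 0
      \<and> u t powr \<alpha> * a * sin (u t) * (?kappa - ?rhs) = 0"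
    using derivative_iff[OF has_real_derivative_u_momentum[OF assms(1-5,7)]]
      derivative_iff[OF has_real_derivative_v_momentum[OF assms(1-5,7)]]
    by (auto simp: DERIV_imp_deriv[OF v])
  ultimately show ?thesis
    by auto
qed

theorem proposition3p1:
  fixes \<alpha> :: real and u v :: "real \<Rightarrow> real" and I :: "real set"
  assumes "\<alpha> \<noteq> 0"
    and "open I" and "is_interval I" and "I \<noteq> {}"
    and "\<forall>t\<in>I. u differentiable (at t) \<and> v differentiable (at t)"
    and "\<forall>t\<in>I. deriv u differentiable (at t) \<and> deriv v differentiable (at t)"
    and "\<forall>t\<in>I. 0 < u t \<and> u t < pi"
    and "\<forall>t\<in>I. speed u v t > 0"
  shows "alpha_stationary \<alpha> u v I \<longleftrightarrow>
    (\<forall>t\<in>I. curvature u v t = \<alpha> * (unit_normal u v t \<bullet> xi_coord (u t) (v t)) / u t)"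
proof -
  have derivatives: "(u has_real_derivative deriv u t) (at t)"
    "(v has_real_derivative deriv v t) (at t)"
    "(deriv u has_real_derivative deriv (deriv u) t) (at t)"
    "(deriv v has_real_derivative deriv (deriv v) t) (at t)" if "t \<in> I" for t
    using assms(5,6) that by (simp_all add: DERIV_deriv_iff_real_differentiable)
  have "curvature u v t = \<alpha> * (unit_normal u v t \<bullet> xi_coord (u t) (v t)) / u t \<longleftrightarrow>
      curvature_coord (u t) (deriv u t) (deriv v t) (deriv (deriv u) t) (deriv (deriv v) t)
        = \<alpha> * (deriv v t * sin (u t) / speed u v t) / u t" if "t \<in> I" for t
    using assms(5) that
    by (simp add: curvature_eq_curvature_coord[OF assms(2) that assms(5) derivatives(3,4)[OF that]]
        unit_normal_inner_xi)
  then show ?thesis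
    unfolding alpha_stationary_def
    using euler_lagrange_at_iff[OF derivatives] assms(7,8) by auto
qed

end
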